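(* Let $\mathbb{M}$ be a weight sequence with sequence of quotients $\mathbf{m}=(m_p)_{p\in\mathbb{N}_0}$, and let $\beta\ge0$. The following are equivalent: (i) there exists $C>0$ such that $\sum_{k=p}^{\infty}\frac{(k+1)^{\beta-1}}{m_k}\le C\frac{(p+1)^{\beta}}{m_p}$ for all $p\in\mathbb{N}_0$; (ii) there exists $\varepsilon>0$ such that $(m_p/p^{\beta+\varepsilon})_{p\in\mathbb{N}}$ is almost increasing; (iii) there exists a sequence $\mathbf{h}\simeq\mathbf{m}$ such that $((p+1)^{-\beta}h_p)_{p\in\mathbb{N}_0}$ is nondecreasing and $\inf_{p\ge1}\frac{h_{2p}}{h_p}>2^{\beta}$; (iv) $\lim_{k\to\infty}\liminf_{p\to\infty}\frac{m_{kp}}{k^{\beta}m_p}=\infty$; (v) there exists $k\in\mathbb{N}$, $k\ge2$, such that $\liminf_{p\to\infty}\frac{m_{kp}}{m_p}>k^{\beta}$; (vi) for every $\theta\in(0,1)$ there exists $k\in\mathbb{N}$, $k\ge2$, such that $m_p\le\theta k^{-\beta}m_{kp}$ for every $p\in\mathbb{N}$; (vii) $\beta(\mathbf{m})>\beta$; (viii) $\gamma(\mathbb{M})>\beta$; (ix) there exists $C>0$ such that $\sum_{k=0}^{p}\frac{m_k}{(k+1)^{1+\beta}}\le C\frac{m_p}{(p+1)^{\beta}}$ for every $p\in\mathbb{N}_0$.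
   Context: A weight sequence is a sequence $\mathbb{M}=(M_p)_{p\in\mathbb{N}_0}$ of positive reals with $M_0=1$, logarithmically convex ($M_p^2\le M_{p-1}M_{p+1}$ for $p\in\mathbb{N}$) and $\lim_{p\to\infty}M_p^{1/p}=\infty$; its quotients are $m_p=M_{p+1}/M_p$. A sequence $(a_p)_{p\in\mathbb{N}}$ is almost increasing if there is $M>0$ with $a_p\le Ma_q$ for all $p\le q$. $\mathbf{h}\simeq\mathbf{m}$ means there is $c\ge1$ with $c^{-1}m_p\le h_p\le cm_p$ for all $p$. $\beta(\mathbf{m})$ is the lower Matuszewska index of the sequence $(m_{p-1})_{p\in\mathbb{N}}$, defined as $\beta(f)$ for the step function $f(x)=m_{\lfloor x\rfloor-1}$, $x\ge1$, where $\beta(f):=\sup\{\beta\in\mathbb{R}:\exists D_\beta>0\ \forall\Lambda>1,\ \liminf_{x\to\infty}\inf_{\lambda\in[1,\Lambda]}\frac{f(\lambda x)}{\lambda^{\beta}f(x)}\ge D_\beta\}$. For $\gamma\in\mathbb{R}$, $\mathbb{M}$ satisfies $(P_\gamma)$ if there is a real sequence $\boldsymbol{\ell}\simeq\mathbf{m}$ with $((p+1)^{-\gamma}\ell_p)_{p\in\mathbb{N}_0}$ nondecreasing; $\gamma(\mathbb{M}):=\sup\{\gamma\in\mathbb{R}:(P_\gamma)\text{ holds}\}$ ($\sup\emptyset=-\infty$). *)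

theory Defs
  imports "HOL-Analysis.Analysis"
begin

definition weight_sequence :: "(nat \<Rightarrow> real) \<Rightarrow> bool" where
  "weight_sequence M \<longleftrightarrow>
     (\<forall>p. M p > 0) \<and> M 0 = 1 \<and>
     (\<forall>p\<ge>1. (M p)\<^sup>2 \<le> M (p - 1) * M (p + 1)) \<and>
     filterlim (\<lambda>p. M p powr (1 / real p)) at_top sequentially"

definition quotients :: "(nat \<Rightarrow> real) \<Rightarrow> nat \<Rightarrow> real" where
  "quotients M p = M (Suc p) / M p"

definition almost_increasing :: "(nat \<Rightarrow> real) \<Rightarrow> bool" where
  "almost_increasing a \<longleftrightarrow> (\<exists>K>0. \<forall>p q. 1 \<le> p \<longrightarrow> p \<le> q \<longrightarrow> a p \<le> K * a q)"

definition seq_equiv :: "(nat \<Rightarrow> real) \<Rightarrow> (nat \<Rightarrow> real) \<Rightarrow> bool" where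
  "seq_equiv h m \<longleftrightarrow> (\<exists>c\<ge>1. \<forall>p. m p / c \<le> h p \<and> h p \<le> c * m p)"

text \<open>Lower Matuszewska index of a function f (defined for large x), as an extended real
  (sup of the empty set is -\<infinity>).\<close>
definition lower_matuszewska :: "(real \<Rightarrow> real) \<Rightarrow> ereal" where
  "lower_matuszewska f = Sup {ereal b | b. \<exists>D>0. \<forall>\<Lambda>>1.
      Liminf at_top (\<lambda>x. ereal (INF t\<in>{1..\<Lambda>}. f (t * x) / (t powr b * f x))) \<ge> ereal D}"

text \<open>\<beta>(m): the lower Matuszewska index of (m_{p-1})_{p\<ge>1}, via the step function
  f(x) = m_{\<lfloor>x\<rfloor>-1}, x \<ge> 1.\<close>
definition beta_index :: "(nat \<Rightarrow> real) \<Rightarrow> ereal" where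
  "beta_index m = lower_matuszewska (\<lambda>x. m (nat \<lfloor>x\<rfloor> - 1))"

definition P_cond :: "real \<Rightarrow> (nat \<Rightarrow> real) \<Rightarrow> bool" where
  "P_cond \<gamma> M \<longleftrightarrow> (\<exists>l. seq_equiv l (quotients M) \<and>
      mono (\<lambda>p. (real p + 1) powr (- \<gamma>) * l p))"

definition gamma_index :: "(nat \<Rightarrow> real) \<Rightarrow> ereal" where
  "gamma_index M = Sup {ereal \<gamma> | \<gamma>. P_cond \<gamma> M}"

end

theory Submission
  imports Defs
begin

(*
  Condition (ii), the almost increase of m_p / p^(beta + eps), is the hub.  It gives (i) and (ix) by
  comparison with the power sums of (k + 1)^(-1 - eps) and (k + 1)^(eps - 1), (iii) and (viii) by
  regularising m_p / p^(beta + eps) through its running maximum, and (iv) and (vii) by comparing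
  m_p with m_(tp).  Conversely, (i), (iii), (v), (vii) and (ix) each yield a geometric gain
  m_(b^j p) >= A rho^j (b^j)^beta m_p with rho > 1 along the powers of a fixed b; for the sums this is
  because the partial sums grow, and the tails shrink, by a fixed factor when p is doubled.  Such a
  gain is (vi), and (vi) with theta = 1/2 says m_(kp) >= k^(beta + eps) m_p for eps = log_k 2, which
  interpolates between the powers of k to (ii).  (iv) trivially implies (v), and (viii) gives (ii)
  directly.
*)

lemma powr_mvt:
  fixes a b r :: real
  assumes "0 < a" "a < b"
  obtains z where "a < z" "z < b" "b powr r - a powr r = (b - a) * (r * z powr (r - 1))"
proof -
  have "((\<lambda>z. z powr r) has_real_derivative r * x powr (r - 1)) (at x)"
    if "a \<le> x" "x \<le> b" for x
    using assms that by (intro has_real_derivative_powr) auto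
  from MVT2[OF assms(2) this] that show ?thesis
    by auto
qed

lemma sum_powr_le:
  fixes e :: real
  assumes "0 < e" "e \<le> 1"
  shows "(\<Sum>k\<le>p. (real k + 1) powr (e - 1)) \<le> (real p + 1) powr e / e"
proof (induction p)
  case 0
  then show ?case using assms by simp
next
  case (Suc p)
  obtain z where z: "real p + 1 < z" "z < real p + 2"
    "(real p + 2) powr e - (real p + 1) powr e = e * z powr (e - 1)"
    using powr_mvt[of "real p + 1" "real p + 2" e] by auto
  have "(real p + 2) powr (e - 1) \<le> z powr (e - 1)"
    using z assms by (intro powr_mono2') auto
  then have "(real (Suc p) + 1) powr (e - 1) \<le> ((real (Suc p) + 1) powr e - (real p + 1) powr e) / e"
    using z assms by (simp add: field_simps add.commute)
  with Suc show ?case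
    using assms by (simp add: field_simps)
qed

lemma powr_le_telescoping:
  fixes e x :: real
  assumes "0 < e" "0 \<le> x"
  shows "(x + 1) powr (-1 - e) \<le> 2 powr (1 + e) / e * ((x + 1) powr (-e) - (x + 2) powr (-e))"
proof -
  obtain z where z: "x + 1 < z" "z < x + 2"
    and mvt: "(x + 2) powr (-e) - (x + 1) powr (-e) = (x + 2 - (x + 1)) * (- e * z powr (-e - 1))"
    using powr_mvt[of "x + 1" "x + 2" "-e"] assms by auto
  have "-e - 1 = -1 - e"
    by simp
  with mvt have diff: "(x + 1) powr (-e) - (x + 2) powr (-e) = e * z powr (-1 - e)"
    by simp
  have "(x + 1) powr (-1 - e) = 2 powr (1 + e) * (2 * (x + 1)) powr (-1 - e)"
    unfolding powr_mult by (simp add: powr_add[symmetric])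
  also have "\<dots> \<le> 2 powr (1 + e) * z powr (-1 - e)"
    using z assms by (intro mult_left_mono powr_mono2') auto
  also have "\<dots> = 2 powr (1 + e) / e * ((x + 1) powr (-e) - (x + 2) powr (-e))"
    using diff assms by simp
  finally show ?thesis .
qed

lemma iterated_dilation_bound:
  fixes f :: "nat \<Rightarrow> real"
  assumes step: "\<And>p. P \<le> p \<Longrightarrow> r * f p \<le> f (k * p)"
    and "0 \<le> r" "1 \<le> k" "P \<le> p"
  shows "r ^ i * f p \<le> f (k ^ i * p)"
proof (induction i)
  case 0
  then show ?case by simp
next
  case (Suc i)
  have "p \<le> k ^ i * p"
    using assms(3) by simp
  then have "P \<le> k ^ i * p"
    using assms(4) by linarith
  then have "r * f (k ^ i * p) \<le> f (k * (k ^ i * p))"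
    by (rule step)
  moreover have "r * (r ^ i * f p) \<le> r * f (k ^ i * p)"
    using Suc assms(2) by (intro mult_left_mono)
  ultimately show ?case
    by (simp add: mult.assoc mult.left_commute)
qed

lemma iterated_contraction_bound:
  fixes f :: "nat \<Rightarrow> real"
  assumes step: "\<And>p. P \<le> p \<Longrightarrow> r * f (k * p) \<le> f p"
    and "0 \<le> r" "1 \<le> k" "P \<le> p"
  shows "r ^ i * f (k ^ i * p) \<le> f p"
proof (induction i)
  case 0
  then show ?case by simp
next
  case (Suc i)
  have "p \<le> k ^ i * p"
    using assms(3) by simp
  then have "r * f (k * (k ^ i * p)) \<le> f (k ^ i * p)"
    using assms(4) by (intro step) linarith
  then have "r ^ i * (r * f (k * (k ^ i * p))) \<le> r ^ i * f (k ^ i * p)"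
    using assms(2) by (intro mult_left_mono) auto
  with Suc show ?case
    by (simp add: mult.assoc mult.left_commute)
qed

lemma power_powr: "0 < x \<Longrightarrow> (x ^ n) powr a = (x powr a) ^ n" for x a :: real
  by (simp add: powr_realpow[symmetric] powr_powr powr_power mult.commute)

lemma one_le_powr_mult: "1 \<le> x \<Longrightarrow> 0 \<le> a \<Longrightarrow> 1 \<le> K \<Longrightarrow> 1 \<le> x powr a * K" for x a K :: real
  using mult_mono[of 1 "x powr a" 1 K] ge_one_powr_ge_zero[of x a] by simp

lemma mult_frac_le_swap:
  fixes a u v x y :: real
  assumes "a * (y / v) \<le> x / u" "0 < u" "0 < v" "0 < x" "0 < y"
  shows "a * (u / x) \<le> v / y"
  using assms by (simp add: field_simps)

lemma eventually_less_powr: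
  fixes c e :: real
  assumes "0 < e"
  shows "eventually (\<lambda>k. c < real k powr e) sequentially"
proof -
  obtain N :: nat where N: "(max c 0 + 1) powr (1 / e) \<le> real N"
    using real_arch_simple by blast
  have "c < real k powr e" if "N \<le> k" for k
  proof -
    have "max c 0 + 1 = ((max c 0 + 1) powr (1 / e)) powr e"
      using assms by (simp add: powr_powr)
    also have "\<dots> \<le> real k powr e"
      using N that assms by (intro powr_mono2) auto
    finally show ?thesis by linarith
  qed
  then show ?thesis
    unfolding eventually_sequentially by blast
qed

lemma running_max_bounds:
  fixes a :: "nat \<Rightarrow> real"
  assumes "\<And>p q. p \<le> q \<Longrightarrow> a p \<le> K * a q"
  shows "a p \<le> Max (a ` {..p})" "Max (a ` {..p}) \<le> K * a p" "mono (\<lambda>p. Max (a ` {..p}))"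
proof -
  show "a p \<le> Max (a ` {..p})"
    by (intro Max_ge) auto
  show "Max (a ` {..p}) \<le> K * a p"
    using assms by (subst Max_le_iff) auto
  show "mono (\<lambda>p. Max (a ` {..p}))"
    unfolding mono_def by (auto intro!: Max_mono)
qed

lemma seq_equiv_weighted_running_max:
  fixes m w :: "nat \<Rightarrow> real"
  assumes m: "\<And>p. 0 \<le> m p" and w: "\<And>p. 0 < w p" and "1 \<le> K"
    and K: "\<And>p q. p \<le> q \<Longrightarrow> m p / w p \<le> K * (m q / w q)"
  shows "seq_equiv (\<lambda>p. w p * Max ((\<lambda>q. m q / w q) ` {..p})) m"
  unfolding seq_equiv_def
proof (intro exI[of _ K] conjI allI)
  fix p
  have "m p = w p * (m p / w p)"
    using w[of p] by simp
  also have "\<dots> \<le> w p * Max ((\<lambda>q. m q / w q) ` {..p})"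
    using running_max_bounds(1)[of "\<lambda>q. m q / w q", OF K] w[of p] by (intro mult_left_mono) auto
  moreover have "m p / K \<le> m p / 1"
    using m[of p] \<open>1 \<le> K\<close> by (intro divide_left_mono) auto
  ultimately show "m p / K \<le> w p * Max ((\<lambda>q. m q / w q) ` {..p})"
    by simp
  have "w p * Max ((\<lambda>q. m q / w q) ` {..p}) \<le> w p * (K * (m p / w p))"
    using running_max_bounds(2)[of "\<lambda>q. m q / w q", OF K] w[of p] by (intro mult_left_mono) auto
  also have "\<dots> = K * m p"
    using w[of p] by simp
  finally show "w p * Max ((\<lambda>q. m q / w q) ` {..p}) \<le> K * m p" .
qed (fact \<open>1 \<le> K\<close>)

lemma ereal_less_Liminf_iff:
  fixes f :: "'a \<Rightarrow> real"
  shows "ereal c < Liminf F (\<lambda>x. ereal (f x)) \<longleftrightarrow> (\<exists>r>c. eventually (\<lambda>x. r \<le> f x) F)"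
proof
  assume "ereal c < Liminf F (\<lambda>x. ereal (f x))"
  then obtain r where r: "ereal c < ereal r" "ereal r < Liminf F (\<lambda>x. ereal (f x))"
    using ereal_dense2 by blast
  from less_LiminfD[OF r(2)] have "eventually (\<lambda>x. r \<le> f x) F"
    by eventually_elim simp
  with r(1) show "\<exists>r>c. eventually (\<lambda>x. r \<le> f x) F"
    by auto
next
  assume "\<exists>r>c. eventually (\<lambda>x. r \<le> f x) F"
  then obtain r where "c < r" and ev: "eventually (\<lambda>x. ereal r \<le> ereal (f x)) F"
    by auto
  from \<open>c < r\<close> have "ereal c < ereal r"
    by simp
  also from ev have "ereal r \<le> Liminf F (\<lambda>x. ereal (f x))"
    by (rule Liminf_bounded)
  finally show "ereal c < Liminf F (\<lambda>x. ereal (f x))" .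
qed

lemma lower_matuszewska_ge:
  assumes "0 < D" and bound: "\<And>x t. X \<le> x \<Longrightarrow> 1 \<le> t \<Longrightarrow> D \<le> f (t * x) / (t powr b * f x)"
  shows "ereal b \<le> lower_matuszewska f"
  unfolding lower_matuszewska_def
proof (rule Sup_upper, intro CollectI exI conjI allI impI)
  fix \<Lambda> :: real
  assume "1 < \<Lambda>"
  have "eventually (\<lambda>x. ereal D \<le> ereal (INF t\<in>{1..\<Lambda>}. f (t * x) / (t powr b * f x))) at_top"
    using eventually_ge_at_top[of X]
    by eventually_elim (use \<open>1 < \<Lambda>\<close> bound in \<open>auto intro: cINF_greatest\<close>)
  then show "ereal D \<le> Liminf at_top (\<lambda>x. ereal (INF t\<in>{1..\<Lambda>}. f (t * x) / (t powr b * f x)))"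
    by (rule Liminf_bounded)
qed (use \<open>0 < D\<close> in auto)

lemma lower_matuszewska_greaterE:
  fixes f :: "real \<Rightarrow> real"
  assumes "ereal \<beta> < lower_matuszewska f" and f_pos: "\<And>x. 0 < f x"
  obtains b c where "\<beta> < b" "0 < c" "\<And>t. 1 \<le> t \<Longrightarrow> eventually (\<lambda>x. c * t powr b * f x \<le> f (t * x)) at_top"
proof -
  obtain b D where "\<beta> < b" "0 < D"
    and liminf: "\<And>\<Lambda>. 1 < \<Lambda> \<Longrightarrow> ereal D \<le> Liminf at_top (\<lambda>x. ereal (INF t\<in>{1..\<Lambda>}. f (t * x) / (t powr b * f x)))"
    using assms(1) unfolding lower_matuszewska_def less_Sup_iff by auto
  have "eventually (\<lambda>x. D / 2 * t powr b * f x \<le> f (t * x)) at_top" if "1 \<le> t" for t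
  proof -
    have "ereal (D / 2) < ereal D"
      using \<open>0 < D\<close> by simp
    also have "\<dots> \<le> Liminf at_top (\<lambda>x. ereal (INF s\<in>{1..t + 1}. f (s * x) / (s powr b * f x)))"
      using liminf[of "t + 1"] \<open>1 \<le> t\<close> by simp
    finally have "ereal (D / 2) < Liminf at_top (\<lambda>x. ereal (INF s\<in>{1..t + 1}. f (s * x) / (s powr b * f x)))" .
    then show ?thesis
    proof (rule less_LiminfD[THEN eventually_mono])
      fix x
      define I where "I = (INF s\<in>{1..t + 1}. f (s * x) / (s powr b * f x))"
      assume "ereal (D / 2) < ereal I"
      then have "D / 2 * (t powr b * f x) \<le> I * (t powr b * f x)"
        using f_pos[of x] by (intro mult_right_mono) auto
      moreover have "I \<le> f (t * x) / (t powr b * f x)"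
        unfolding I_def using \<open>1 \<le> t\<close> f_pos by (intro cINF_lower bdd_belowI[of _ 0]) (auto intro: less_imp_le)
      then have "I * (t powr b * f x) \<le> f (t * x)"
        using f_pos[of x] \<open>1 \<le> t\<close> by (simp add: le_divide_eq)
      ultimately show "D / 2 * t powr b * f x \<le> f (t * x)"
        by (simp add: mult.assoc)
    qed
  qed
  with \<open>\<beta> < b\<close> \<open>0 < D\<close> show ?thesis
    by (intro that[of b "D / 2"]) auto
qed

lemma summable_le_telescoping:
  fixes F g :: "nat \<Rightarrow> real"
  assumes F_nonneg: "\<And>n. p \<le> n \<Longrightarrow> 0 \<le> F n" and F_le: "\<And>n. p \<le> n \<Longrightarrow> F n \<le> Z * (g n - g (Suc n))"
    and g_lim: "(\<lambda>k. g (k + p)) \<longlonglongrightarrow> 0"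
  shows "summable (\<lambda>k. F (k + p))" "(\<Sum>k. F (k + p)) \<le> Z * g p"
proof -
  from telescope_sums'[OF g_lim] have sums: "(\<lambda>k. Z * (g (k + p) - g (Suc (k + p)))) sums (Z * g p)"
    by (intro sums_mult) simp
  have "norm (F (k + p)) \<le> Z * (g (k + p) - g (Suc (k + p)))" for k
    using F_nonneg[of "k + p"] F_le[of "k + p"] by simp
  then show "summable (\<lambda>k. F (k + p))"
    by (intro summable_comparison_test[OF _ sums_summable[OF sums]]) blast
  then show "(\<Sum>k. F (k + p)) \<le> Z * g p"
    using suminf_le[OF F_le _ sums_summable[OF sums]] sums_unique[OF sums] by simp
qed

lemma doubling_growth_from_increments:
  fixes s B :: "nat \<Rightarrow> real"
  assumes "0 < C" "0 < c" and s_nonneg: "\<And>p. 0 \<le> s p" and s_le: "\<And>p. s p \<le> C * B p"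
    and increment: "\<And>p. 1 \<le> p \<Longrightarrow> s p + B p / c \<le> s (2 * p)"
  obtains A \<rho> where "0 < A" "1 < \<rho>" "\<And>j p. 1 \<le> j \<Longrightarrow> 1 \<le> p \<Longrightarrow> A * \<rho> ^ j * B p \<le> B (2 ^ j * p)"
proof -
  define \<delta> where "\<delta> = 1 / (C * c)"
  have "0 < \<delta>"
    unfolding \<delta>_def using assms(1,2) by simp
  have "(1 + \<delta>) * s p \<le> s (2 * p)" if "1 \<le> p" for p
  proof -
    have "\<delta> * s p \<le> B p / c"
      unfolding \<delta>_def using s_le[of p] assms(1,2) by (simp add: field_simps)
    with increment[OF that] show ?thesis
      by (simp add: algebra_simps)
  qed
  then have iter: "(1 + \<delta>) ^ i * s p \<le> s (2 ^ i * p)" if "1 \<le> p" for i p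
    using iterated_dilation_bound[of 1 "1 + \<delta>" s 2 p i] that \<open>0 < \<delta>\<close> by simp
  have growth: "1 / (C * c * (1 + \<delta>)) * (1 + \<delta>) ^ j * B p \<le> B (2 ^ j * p)" if "1 \<le> j" "1 \<le> p" for j p
  proof -
    obtain i where j: "j = Suc i"
      using \<open>1 \<le> j\<close> by (cases j) auto
    have "(1 + \<delta>) ^ i * (B p / c) \<le> (1 + \<delta>) ^ i * s (2 * p)"
      using increment[OF \<open>1 \<le> p\<close>] s_nonneg[of p] \<open>0 < \<delta>\<close> by (intro mult_left_mono) auto
    also have "\<dots> \<le> s (2 ^ j * p)"
      using iter[of "2 * p" i] \<open>1 \<le> p\<close> unfolding j by (simp add: mult.assoc mult.left_commute)
    also have "\<dots> \<le> C * B (2 ^ j * p)"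
      by (rule s_le)
    finally have "(1 + \<delta>) ^ i * (B p / c) / C \<le> C * B (2 ^ j * p) / C"
      by (rule divide_right_mono) (use assms(1) in simp)
    then have "(1 + \<delta>) ^ i * (B p / c) / C \<le> B (2 ^ j * p)"
      using assms(1) by simp
    then show ?thesis
      using \<open>0 < \<delta>\<close> unfolding j by (simp add: mult.commute)
  qed
  show ?thesis
    by (rule that[of "1 / (C * c * (1 + \<delta>))" "1 + \<delta>", OF _ _ growth]) (use \<open>0 < \<delta>\<close> assms(1,2) in auto)
qed

lemma doubling_decay_from_increments:
  fixes t T :: "nat \<Rightarrow> real"
  assumes "0 < C" "0 < c" and t_nonneg: "\<And>p. 0 \<le> t p" and t_le: "\<And>p. t p \<le> C * T p"
    and increment: "\<And>p. 1 \<le> p \<Longrightarrow> t (2 * p) + T (2 * p) / c \<le> t p"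
  obtains A \<rho> where "0 < A" "1 < \<rho>" "\<And>j p. 1 \<le> j \<Longrightarrow> 1 \<le> p \<Longrightarrow> A * \<rho> ^ j * T (2 ^ j * p) \<le> T p"
proof -
  define \<delta> where "\<delta> = 1 / (C * c)"
  have "0 < \<delta>"
    unfolding \<delta>_def using assms(1,2) by simp
  have "(1 + \<delta>) * t (2 * p) \<le> t p" if "1 \<le> p" for p
  proof -
    have "\<delta> * t (2 * p) \<le> T (2 * p) / c"
      unfolding \<delta>_def using t_le[of "2 * p"] assms(1,2) by (simp add: field_simps)
    with increment[OF that] show ?thesis
      by (simp add: algebra_simps)
  qed
  then have iter: "(1 + \<delta>) ^ i * t (2 ^ i * p) \<le> t p" if "1 \<le> p" for i p
    using iterated_contraction_bound[of 1 "1 + \<delta>" t 2 p i] that \<open>0 < \<delta>\<close> by simp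
  have decay: "1 / (C * c * (1 + \<delta>)) * (1 + \<delta>) ^ j * T (2 ^ j * p) \<le> T p" if "1 \<le> j" "1 \<le> p" for j p
  proof -
    obtain i where j: "j = Suc i"
      using \<open>1 \<le> j\<close> by (cases j) auto
    have "1 \<le> 2 ^ i * p"
      using \<open>1 \<le> p\<close> by simp
    have "(1 + \<delta>) ^ i * (T (2 ^ j * p) / c) \<le> (1 + \<delta>) ^ i * t (2 ^ i * p)"
      using increment[OF \<open>1 \<le> 2 ^ i * p\<close>] t_nonneg[of "2 * (2 ^ i * p)"] \<open>0 < \<delta>\<close> unfolding j
      by (intro mult_left_mono) (auto simp: mult.assoc)
    also have "\<dots> \<le> C * T p"
      using iter[OF \<open>1 \<le> p\<close>, of i] t_le[of p] by simp
    finally have "(1 + \<delta>) ^ i * (T (2 ^ j * p) / c) / C \<le> C * T p / C"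
      by (rule divide_right_mono) (use assms(1) in simp)
    then have "(1 + \<delta>) ^ i * (T (2 ^ j * p) / c) / C \<le> T p"
      using assms(1) by simp
    then show ?thesis
      using \<open>0 < \<delta>\<close> unfolding j by (simp add: mult.commute)
  qed
  show ?thesis
    by (rule that[of "1 / (C * c * (1 + \<delta>))" "1 + \<delta>", OF _ _ decay]) (use \<open>0 < \<delta>\<close> assms(1,2) in auto)
qed

lemma mono_mult_nonneg:
  fixes f g :: "nat \<Rightarrow> real"
  assumes "mono f" "mono g" "\<And>p. 0 \<le> f p" "\<And>p. 0 \<le> g p"
  shows "mono (\<lambda>p. f p * g p)"
  by (rule monoI, rule mult_mono) (use assms in \<open>auto dest: monoD\<close>)

lemma mono_doubling_weight:
  fixes \<beta> \<epsilon> :: real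
  assumes "0 \<le> \<beta>" "0 \<le> \<epsilon>"
  shows "mono (\<lambda>p. (real p + 1) powr (- \<beta>) * (if p = 0 then 2 powr (- \<beta>) else real p powr (\<beta> + \<epsilon>)))"
    (is "mono ?g")
proof (rule incseq_SucI)
  fix p
  have g: "?g p = (real p / (real p + 1)) powr \<beta> * real p powr \<epsilon>" if "1 \<le> p" for p
    using that by (simp add: powr_divide powr_add powr_minus field_simps)
  show "?g p \<le> ?g (Suc p)"
  proof (cases "p = 0")
    case False
    have "real p / (real p + 1) \<le> real (Suc p) / (real (Suc p) + 1)"
      by (simp add: field_simps)
    then have "(real p / (real p + 1)) powr \<beta> * real p powr \<epsilon>
        \<le> (real (Suc p) / (real (Suc p) + 1)) powr \<beta> * real (Suc p) powr \<epsilon>"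
      using assms by (intro mult_mono powr_mono2) auto
    then show ?thesis
      using False g[of p] g[of "Suc p"] by simp
  qed simp
qed

definition tail_sum_bounded :: "(nat \<Rightarrow> real) \<Rightarrow> real \<Rightarrow> bool" where
  "tail_sum_bounded m \<beta> \<longleftrightarrow> (\<exists>C>0. \<forall>p. summable (\<lambda>k. (real (k + p) + 1) powr (\<beta> - 1) / m (k + p)) \<and>
      (\<Sum>k. (real (k + p) + 1) powr (\<beta> - 1) / m (k + p)) \<le> C * (real p + 1) powr \<beta> / m p)"

definition almost_increasing_beyond :: "(nat \<Rightarrow> real) \<Rightarrow> real \<Rightarrow> bool" where
  "almost_increasing_beyond m \<beta> \<longleftrightarrow> (\<exists>\<epsilon>>0. almost_increasing (\<lambda>p. m p / real p powr (\<beta> + \<epsilon>)))"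

definition doubling_regular :: "(nat \<Rightarrow> real) \<Rightarrow> real \<Rightarrow> bool" where
  "doubling_regular m \<beta> \<longleftrightarrow> (\<exists>h. seq_equiv h m \<and> mono (\<lambda>p. (real p + 1) powr (- \<beta>) * h p) \<and>
      (INF p\<in>{1..}. h (2 * p) / h p) > 2 powr \<beta>)"

definition dilation_ratio_unbounded :: "(nat \<Rightarrow> real) \<Rightarrow> real \<Rightarrow> bool" where
  "dilation_ratio_unbounded m \<beta> \<longleftrightarrow>
     (\<lambda>k. Liminf sequentially (\<lambda>p. ereal (m (k * p) / (real k powr \<beta> * m p)))) \<longlonglongrightarrow> PInfty"

definition dilation_ratio_exceeds :: "(nat \<Rightarrow> real) \<Rightarrow> real \<Rightarrow> bool" where
  "dilation_ratio_exceeds m \<beta> \<longleftrightarrow>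
     (\<exists>k::nat. k \<ge> 2 \<and> Liminf sequentially (\<lambda>p. ereal (m (k * p) / m p)) > ereal (real k powr \<beta>))"

definition uniform_dilation :: "(nat \<Rightarrow> real) \<Rightarrow> real \<Rightarrow> bool" where
  "uniform_dilation m \<beta> \<longleftrightarrow> (\<forall>\<theta>::real. 0 < \<theta> \<and> \<theta> < 1 \<longrightarrow>
     (\<exists>k::nat. k \<ge> 2 \<and> (\<forall>p\<ge>1. m p \<le> \<theta> * real k powr (- \<beta>) * m (k * p))))"

definition regular_exponent :: "(nat \<Rightarrow> real) \<Rightarrow> real \<Rightarrow> bool" where
  "regular_exponent m \<gamma> \<longleftrightarrow> (\<exists>l. seq_equiv l m \<and> mono (\<lambda>p. (real p + 1) powr (- \<gamma>) * l p))"

definition head_sum_bounded :: "(nat \<Rightarrow> real) \<Rightarrow> real \<Rightarrow> bool" where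
  "head_sum_bounded m \<beta> \<longleftrightarrow>
     (\<exists>C>0. \<forall>p. (\<Sum>k\<le>p. m k / (real k + 1) powr (1 + \<beta>)) \<le> C * m p / (real p + 1) powr \<beta>)"

locale nondecreasing_quotients =
  fixes m :: "nat \<Rightarrow> real" and \<beta> :: real
  assumes m_pos: "0 < m p" and m_mono: "mono m" and beta_nonneg: "0 \<le> \<beta>"
begin

lemma m_le: "p \<le> q \<Longrightarrow> m p \<le> m q"
  using m_mono by (simp add: mono_def)

lemma almost_increasing_const_ge_1:
  assumes "\<And>p q. 1 \<le> p \<Longrightarrow> p \<le> q \<Longrightarrow> m p / real p powr \<gamma> \<le> K * (m q / real q powr \<gamma>)"
  shows "1 \<le> K"
  using assms[of 1 1] m_pos[of 1] by simp

lemma almost_increasing_smaller_exponent: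
  assumes K: "\<And>p q. 1 \<le> p \<Longrightarrow> p \<le> q \<Longrightarrow> m p / real p powr \<gamma> \<le> K * (m q / real q powr \<gamma>)"
    and "\<gamma>' \<le> \<gamma>" "1 \<le> p" "p \<le> q"
  shows "m p / real p powr \<gamma>' \<le> K * (m q / real q powr \<gamma>')"
proof -
  have split: "real n powr \<gamma>' = real n powr \<gamma> / real n powr (\<gamma> - \<gamma>')" for n
    by (simp add: powr_diff[symmetric])
  have "m p / real p powr \<gamma>' = (m p / real p powr \<gamma>) * real p powr (\<gamma> - \<gamma>')"
    unfolding split by simp
  also have "\<dots> \<le> (K * (m q / real q powr \<gamma>)) * real q powr (\<gamma> - \<gamma>')"
    using assms almost_increasing_const_ge_1[OF K] m_pos[of q]
    by (intro mult_mono powr_mono2) auto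
  also have "\<dots> = K * (m q / real q powr \<gamma>')"
    unfolding split by simp
  finally show ?thesis .
qed

lemma almost_increasing_beyondE:
  assumes "almost_increasing_beyond m \<beta>"
  obtains \<epsilon> K where "0 < \<epsilon>" "\<epsilon> \<le> 1" "1 \<le> K"
    "\<And>p q. 1 \<le> p \<Longrightarrow> p \<le> q \<Longrightarrow> m p / real p powr (\<beta> + \<epsilon>) \<le> K * (m q / real q powr (\<beta> + \<epsilon>))"
proof -
  obtain \<epsilon> K where "0 < \<epsilon>"
    and K: "\<And>p q. 1 \<le> p \<Longrightarrow> p \<le> q \<Longrightarrow> m p / real p powr (\<beta> + \<epsilon>) \<le> K * (m q / real q powr (\<beta> + \<epsilon>))"
    using assms unfolding almost_increasing_beyond_def almost_increasing_def by blast
  show ?thesis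
  proof (rule that[of "min \<epsilon> 1" K])
    show "1 \<le> K"
      using K by (rule almost_increasing_const_ge_1)
    show "m p / real p powr (\<beta> + min \<epsilon> 1) \<le> K * (m q / real q powr (\<beta> + min \<epsilon> 1))"
      if "1 \<le> p" "p \<le> q" for p q
      by (rule almost_increasing_smaller_exponent[OF K]) (use that in simp_all)
  qed (use \<open>0 < \<epsilon>\<close> in auto)
qed

lemma almost_increasing_shift:
  assumes K: "\<And>p q. 1 \<le> p \<Longrightarrow> p \<le> q \<Longrightarrow> m p / real p powr \<gamma> \<le> K * (m q / real q powr \<gamma>)"
    and "0 \<le> \<gamma>" "p \<le> q"
  shows "m p / (real p + 1) powr \<gamma> \<le> 2 powr \<gamma> * K * (m q / (real q + 1) powr \<gamma>)"
proof (cases "q = 0")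
  case True
  moreover have "1 \<le> 2 powr \<gamma> * K"
    using almost_increasing_const_ge_1[OF K] \<open>0 \<le> \<gamma>\<close> by (simp add: one_le_powr_mult)
  ultimately show ?thesis
    using \<open>p \<le> q\<close> m_pos[of 0] by simp
next
  case False
  then have q: "1 \<le> q"
    by simp
  have "m p / (real p + 1) powr \<gamma> \<le> m (max p 1) / real (max p 1) powr \<gamma>"
    using assms m_le[of p 1] m_pos[of p] by (cases "p = 0") (auto intro!: divide_left_mono powr_mono2)
  also have "\<dots> \<le> K * (m q / real q powr \<gamma>)"
    using K q \<open>p \<le> q\<close> by simp
  also have "m q / real q powr \<gamma> \<le> 2 powr \<gamma> * (m q / (real q + 1) powr \<gamma>)"
  proof -
    have "(real q + 1) powr \<gamma> \<le> (2 * real q) powr \<gamma>"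
      using q \<open>0 \<le> \<gamma>\<close> by (intro powr_mono2) auto
    then show ?thesis
      using q m_pos[of q] by (simp add: powr_mult field_simps mult_left_mono)
  qed
  finally show ?thesis
    using almost_increasing_const_ge_1[OF K] by (simp add: mult_left_mono mult_ac)
qed

lemma almost_increasing_dilation:
  assumes K: "\<And>p q. 1 \<le> p \<Longrightarrow> p \<le> q \<Longrightarrow> m p / real p powr \<gamma> \<le> K * (m q / real q powr \<gamma>)"
    and "1 \<le> p" "1 \<le> k"
  shows "real k powr \<gamma> * m p \<le> K * m (k * p)"
proof -
  have "m p / real p powr \<gamma> \<le> K * (m (k * p) / (real k powr \<gamma> * real p powr \<gamma>))"
    using K[of p "k * p"] assms(2,3) by (simp add: powr_mult)
  then show ?thesis
    using assms(2,3) by (simp add: field_simps)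
qed

lemma uniform_dilation_if_geometric_growth:
  assumes b: "2 \<le> b" and A: "0 < A" and \<rho>: "1 < \<rho>"
    and growth: "\<And>j p. J \<le> j \<Longrightarrow> 1 \<le> p \<Longrightarrow> A * \<rho> ^ j * real (b ^ j) powr \<beta> * m p \<le> m (b ^ j * p)"
  shows "uniform_dilation m \<beta>"
  unfolding uniform_dilation_def
proof (intro allI impI)
  fix \<theta> :: real
  assume \<theta>: "0 < \<theta> \<and> \<theta> < 1"
  obtain n where n: "1 / (A * \<theta>) < \<rho> ^ n"
    using real_arch_pow[OF \<rho>] by blast
  define j where "j = n + J + 1"
  have "1 < A * \<theta> * \<rho> ^ n"
    using n A \<theta> by (simp add: field_simps)
  also have "\<dots> \<le> A * \<theta> * \<rho> ^ j"
    unfolding j_def using A \<theta> \<rho> by (intro mult_left_mono power_increasing) auto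
  finally have large: "1 < A * \<theta> * \<rho> ^ j" .
  have "b \<le> b ^ j"
    using b unfolding j_def by (intro self_le_power) auto
  show "\<exists>k::nat. k \<ge> 2 \<and> (\<forall>p\<ge>1. m p \<le> \<theta> * real k powr (- \<beta>) * m (k * p))"
  proof (intro exI conjI allI impI)
    show "2 \<le> b ^ j"
      using b \<open>b \<le> b ^ j\<close> by linarith
    fix p :: nat
    assume "1 \<le> p"
    have "0 < real (b ^ j)"
      using b by simp
    then have "\<theta> * real (b ^ j) powr (- \<beta>) * (A * \<rho> ^ j * real (b ^ j) powr \<beta> * m p) = A * \<theta> * \<rho> ^ j * m p"
      by (simp add: powr_minus field_simps)
    moreover have "\<theta> * real (b ^ j) powr (- \<beta>) * (A * \<rho> ^ j * real (b ^ j) powr \<beta> * m p)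
        \<le> \<theta> * real (b ^ j) powr (- \<beta>) * m (b ^ j * p)"
      using growth[of j p] \<open>1 \<le> p\<close> \<theta> unfolding j_def by (intro mult_left_mono) auto
    moreover have "m p \<le> A * \<theta> * \<rho> ^ j * m p"
      using large m_pos[of p] by simp
    ultimately show "m p \<le> \<theta> * real (b ^ j) powr (- \<beta>) * m (b ^ j * p)"
      by linarith
  qed
qed

lemma uniform_dilation_if_dyadic_growth:
  assumes "0 < A" "1 < \<rho>"
    and growth: "\<And>j p. 1 \<le> j \<Longrightarrow> 1 \<le> p \<Longrightarrow>
      A * \<rho> ^ j * (m p / (real p + 1) powr \<beta>) \<le> m (2 ^ j * p) / (real (2 ^ j * p) + 1) powr \<beta>"
  shows "uniform_dilation m \<beta>"
proof (rule uniform_dilation_if_geometric_growth[of 2 "A / 2 powr \<beta>" \<rho> 1])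
  fix j p :: nat
  assume "1 \<le> j" "1 \<le> p"
  define N :: nat where "N = 2 ^ j"
  have "real N \<le> real N * real p"
    using \<open>1 \<le> p\<close> by (simp add: mult_le_cancel_left1)
  then have "real N * (real p + 1) \<le> 2 * (real (N * p) + 1)"
    by (simp add: algebra_simps)
  then have "(real N * (real p + 1)) powr \<beta> \<le> (2 * (real (N * p) + 1)) powr \<beta>"
    using beta_nonneg by (intro powr_mono2) auto
  then have "real N powr \<beta> * (real p + 1) powr \<beta> \<le> 2 powr \<beta> * (real (N * p) + 1) powr \<beta>"
    unfolding powr_mult .
  then have "A / 2 powr \<beta> * \<rho> ^ j * real N powr \<beta> * m p
      \<le> A * \<rho> ^ j * (m p / (real p + 1) powr \<beta>) * (real (N * p) + 1) powr \<beta>"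
    using \<open>0 < A\<close> \<open>1 < \<rho>\<close> m_pos[of p] by (simp add: field_simps mult_left_mono)
  also have "\<dots> \<le> m (N * p)"
  proof -
    have "A * \<rho> ^ j * (m p / (real p + 1) powr \<beta>) \<le> m (N * p) / (real (N * p) + 1) powr \<beta>"
      using growth[OF \<open>1 \<le> j\<close> \<open>1 \<le> p\<close>] unfolding N_def .
    moreover have "0 < (real (N * p) + 1) powr \<beta>"
      unfolding powr_gt_zero by linarith
    ultimately show ?thesis
      by (simp add: pos_le_divide_eq)
  qed
  finally show "A / 2 powr \<beta> * \<rho> ^ j * real (2 ^ j) powr \<beta> * m p \<le> m (2 ^ j * p)"
    unfolding N_def .
qed (use assms in auto)

lemma dilation_ratio_exceeds_iff:
  "dilation_ratio_exceeds m \<beta> \<longleftrightarrow>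
     (\<exists>k\<ge>2. \<exists>r > real k powr \<beta>. eventually (\<lambda>p. r * m p \<le> m (k * p)) sequentially)"
proof -
  have "r \<le> m (k * p) / m p \<longleftrightarrow> r * m p \<le> m (k * p)" for k p r
    using m_pos[of p] by (simp add: field_simps)
  then show ?thesis
    unfolding dilation_ratio_exceeds_def ereal_less_Liminf_iff by simp
qed

lemma almost_increasing_if_dilation_step:
  assumes k: "2 \<le> k" and "0 \<le> \<gamma>" and step: "\<And>p. 1 \<le> p \<Longrightarrow> real k powr \<gamma> * m p \<le> m (k * p)"
  shows "almost_increasing (\<lambda>p. m p / real p powr \<gamma>)"
proof -
  define r where "r = real k powr \<gamma>"
  have "0 < r"
    unfolding r_def using k by simp
  have iter: "r ^ n * m p \<le> m (k ^ n * p)" if "1 \<le> p" for n p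
    using iterated_dilation_bound[of 1 r m k p n] step that k \<open>0 < r\<close> unfolding r_def by simp
  have "m p / real p powr \<gamma> \<le> r * (m q / real q powr \<gamma>)" if p: "1 \<le> p" and "p \<le> q" for p q
  proof -
    have "1 \<le> q div p"
      using div_le_mono[OF \<open>p \<le> q\<close>, of p] p by simp
    then obtain n where n: "k ^ n \<le> q div p" "q div p < k ^ (n + 1)"
      using ex_power_ivl1[OF k] by blast
    have "k ^ n * p \<le> q"
      using mult_le_mono1[OF n(1), of p] div_times_less_eq_dividend[of q p] by linarith
    then have grow: "r ^ n * m p \<le> m q"
      using iter[OF p, of n] m_le by (meson order_trans)
    have "q < k ^ (n + 1) * p"
      using n(2) p by (simp add: div_less_iff_less_mult)
    then have "real q \<le> real (k ^ (n + 1) * p)"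
      by (intro of_nat_mono less_imp_le)
    then have "real q powr \<gamma> \<le> real (k ^ (n + 1) * p) powr \<gamma>"
      using \<open>0 \<le> \<gamma>\<close> by (intro powr_mono2) simp_all
    also have "\<dots> = r ^ (n + 1) * real p powr \<gamma>"
      unfolding r_def using k by (simp add: powr_mult power_powr)
    finally have "m p * real q powr \<gamma> \<le> r * (r ^ n * m p) * real p powr \<gamma>"
      using m_pos[of p] by (simp add: mult_left_mono mult_ac)
    also have "\<dots> \<le> r * m q * real p powr \<gamma>"
      using grow \<open>0 < r\<close> by (intro mult_right_mono mult_left_mono) auto
    finally show ?thesis
      using p \<open>p \<le> q\<close> by (simp add: field_simps)
  qed
  with \<open>0 < r\<close> show ?thesis
    unfolding almost_increasing_def by blast
qed

lemma almost_increasing_beyond_if_uniform_dilation: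
  assumes "uniform_dilation m \<beta>"
  shows "almost_increasing_beyond m \<beta>"
proof -
  obtain k :: nat where k: "2 \<le> k" and half: "\<And>p. 1 \<le> p \<Longrightarrow> m p \<le> 1 / 2 * real k powr (- \<beta>) * m (k * p)"
    using spec[OF assms[unfolded uniform_dilation_def], of "1 / 2"] by auto
  define \<epsilon> where "\<epsilon> = log (real k) 2"
  have "0 < \<epsilon>"
    unfolding \<epsilon>_def using k by simp
  have "real k powr (\<beta> + \<epsilon>) = 2 * real k powr \<beta>"
    unfolding \<epsilon>_def using k by (simp add: powr_add)
  then have "real k powr (\<beta> + \<epsilon>) * m p \<le> m (k * p)" if "1 \<le> p" for p
    using half[OF that] k by (simp add: powr_minus field_simps)
  then have "almost_increasing (\<lambda>p. m p / real p powr (\<beta> + \<epsilon>))"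
    using k beta_nonneg \<open>0 < \<epsilon>\<close> by (intro almost_increasing_if_dilation_step) auto
  with \<open>0 < \<epsilon>\<close> show ?thesis
    unfolding almost_increasing_beyond_def by blast
qed

lemma dilation_ratio_unbounded_if_almost_increasing_beyond:
  assumes "almost_increasing_beyond m \<beta>"
  shows "dilation_ratio_unbounded m \<beta>"
proof -
  obtain \<epsilon> K where \<epsilon>: "0 < \<epsilon>" and K1: "1 \<le> K"
    and K: "\<And>p q. 1 \<le> p \<Longrightarrow> p \<le> q \<Longrightarrow> m p / real p powr (\<beta> + \<epsilon>) \<le> K * (m q / real q powr (\<beta> + \<epsilon>))"
    using assms by (rule almost_increasing_beyondE) blast
  have lower: "ereal (real k powr \<epsilon> / K) \<le> Liminf sequentially (\<lambda>p. ereal (m (k * p) / (real k powr \<beta> * m p)))"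
    if "1 \<le> k" for k
  proof (rule Liminf_bounded)
    have "real k powr \<epsilon> / K \<le> m (k * p) / (real k powr \<beta> * m p)" if "1 \<le> p" for p
      using almost_increasing_dilation[OF K that \<open>1 \<le> k\<close>] K1 m_pos[of p] \<open>1 \<le> k\<close>
      by (simp add: powr_add field_simps)
    then show "eventually (\<lambda>p. ereal (real k powr \<epsilon> / K) \<le> ereal (m (k * p) / (real k powr \<beta> * m p))) sequentially"
      unfolding eventually_sequentially by auto
  qed
  show ?thesis
    unfolding dilation_ratio_unbounded_def PInfty_eq_infinity tendsto_PInfty
  proof
    fix r :: real
    have "eventually (\<lambda>k. K * r < real k powr \<epsilon> \<and> 1 \<le> k) sequentially"
      using eventually_less_powr[OF \<epsilon>] eventually_ge_at_top by (rule eventually_conj)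
    then show "eventually (\<lambda>k. ereal r < Liminf sequentially (\<lambda>p. ereal (m (k * p) / (real k powr \<beta> * m p)))) sequentially"
    proof eventually_elim
      case (elim k)
      then have "ereal r < ereal (real k powr \<epsilon> / K)"
        using K1 by (simp add: field_simps)
      also have "\<dots> \<le> Liminf sequentially (\<lambda>p. ereal (m (k * p) / (real k powr \<beta> * m p)))"
        using lower elim by blast
      finally show ?case .
    qed
  qed
qed

lemma dilation_ratio_exceeds_if_unbounded:
  assumes "dilation_ratio_unbounded m \<beta>"
  shows "dilation_ratio_exceeds m \<beta>"
proof -
  have "eventually (\<lambda>k. ereal 1 < Liminf sequentially (\<lambda>p. ereal (m (k * p) / (real k powr \<beta> * m p))) \<and> 2 \<le> k)
      sequentially"
    using assms eventually_ge_at_top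
    unfolding dilation_ratio_unbounded_def PInfty_eq_infinity tendsto_PInfty by (intro eventually_conj) auto
  then obtain k where k: "2 \<le> k"
    and "ereal 1 < Liminf sequentially (\<lambda>p. ereal (m (k * p) / (real k powr \<beta> * m p)))"
    using eventually_happens'[OF sequentially_bot] by blast
  then obtain r where "1 < r" and ev: "eventually (\<lambda>p. r \<le> m (k * p) / (real k powr \<beta> * m p)) sequentially"
    unfolding ereal_less_Liminf_iff by blast
  have "0 < real k powr \<beta>"
    using k by simp
  from ev have "eventually (\<lambda>p. r * real k powr \<beta> * m p \<le> m (k * p)) sequentially"
    by eventually_elim (use \<open>0 < real k powr \<beta>\<close> m_pos in \<open>simp add: field_simps\<close>)
  moreover have "real k powr \<beta> < r * real k powr \<beta>"
    using \<open>1 < r\<close> \<open>0 < real k powr \<beta>\<close> by simp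
  ultimately show ?thesis
    unfolding dilation_ratio_exceeds_iff using k by blast
qed

lemma uniform_dilation_if_dilation_ratio_exceeds:
  assumes "dilation_ratio_exceeds m \<beta>"
  shows "uniform_dilation m \<beta>"
proof -
  obtain k r P where k: "2 \<le> k" and r: "real k powr \<beta> < r"
    and step: "\<And>p. P \<le> p \<Longrightarrow> r * m p \<le> m (k * p)"
    using assms unfolding dilation_ratio_exceeds_iff eventually_sequentially by blast
  have "0 < real k powr \<beta>"
    using k by simp
  then have "0 < r"
    using r by linarith
  show ?thesis
  proof (rule uniform_dilation_if_geometric_growth[OF k])
    show "0 < 1 / r ^ P"
      using \<open>0 < r\<close> by simp
    show "1 < r / real k powr \<beta>"
      using r \<open>0 < real k powr \<beta>\<close> by simp
    fix j p :: nat
    assume "P \<le> j" "1 \<le> p"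
    have "P < k ^ P"
      using less_exp[of P] power_mono[of 2 k P] k by linarith
    moreover have "k ^ P \<le> k ^ P * p"
      using \<open>1 \<le> p\<close> by simp
    ultimately have "P \<le> k ^ P * p"
      by linarith
    have "r ^ (j - P) * m p \<le> r ^ (j - P) * m (k ^ P * p)"
      using m_le[of p "k ^ P * p"] \<open>1 \<le> p\<close> k \<open>0 < r\<close> by (intro mult_left_mono) auto
    also have "\<dots> \<le> m (k ^ (j - P) * (k ^ P * p))"
      using iterated_dilation_bound[of P r m k, OF step] \<open>0 < r\<close> k \<open>P \<le> k ^ P * p\<close> by simp
    also have "k ^ (j - P) * (k ^ P * p) = k ^ j * p"
      using \<open>P \<le> j\<close> by (simp add: mult.assoc[symmetric] power_add[symmetric])
    also have "r ^ (j - P) = 1 / r ^ P * (r / real k powr \<beta>) ^ j * real (k ^ j) powr \<beta>"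
      using \<open>P \<le> j\<close> \<open>0 < r\<close> \<open>0 < real k powr \<beta>\<close> k
      by (simp add: power_powr power_diff power_divide)
    finally show "1 / r ^ P * (r / real k powr \<beta>) ^ j * real (k ^ j) powr \<beta> * m p \<le> m (k ^ j * p)" .
  qed
qed

lemma regular_exponent_if_almost_increasing_beyond:
  assumes "almost_increasing_beyond m \<beta>"
  shows "\<exists>\<gamma>>\<beta>. regular_exponent m \<gamma>"
proof -
  obtain \<epsilon> K where \<epsilon>: "0 < \<epsilon>" and K1: "1 \<le> K"
    and K: "\<And>p q. 1 \<le> p \<Longrightarrow> p \<le> q \<Longrightarrow> m p / real p powr (\<beta> + \<epsilon>) \<le> K * (m q / real q powr (\<beta> + \<epsilon>))"
    using assms by (rule almost_increasing_beyondE) blast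
  define w where "w p = (real p + 1) powr (\<beta> + \<epsilon>)" for p
  define S where "S p = Max ((\<lambda>q. m q / w q) ` {..p})" for p
  have w: "0 < w p" for p
    unfolding w_def by simp
  have ai: "m p / w p \<le> 2 powr (\<beta> + \<epsilon>) * K * (m q / w q)" if "p \<le> q" for p q
    unfolding w_def by (rule almost_increasing_shift[OF K]) (use beta_nonneg \<epsilon> that in auto)
  have "1 \<le> 2 powr (\<beta> + \<epsilon>) * K"
    using K1 beta_nonneg \<epsilon> by (simp add: one_le_powr_mult)
  then have "seq_equiv (\<lambda>p. w p * S p) m"
    unfolding S_def using m_pos w ai by (intro seq_equiv_weighted_running_max) (auto intro: less_imp_le)
  moreover have "(\<lambda>p. (real p + 1) powr (- (\<beta> + \<epsilon>)) * (w p * S p)) = S"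
    unfolding w_def by (intro ext) (simp add: mult.assoc[symmetric] powr_add[symmetric])
  moreover have "mono S"
    unfolding S_def using ai by (rule running_max_bounds(3))
  ultimately show ?thesis
    unfolding regular_exponent_def using \<epsilon> by (intro exI[of _ "\<beta> + \<epsilon>"]) auto
qed

lemma almost_increasing_beyond_if_regular_exponent:
  assumes "regular_exponent m \<gamma>" and "\<beta> < \<gamma>"
  shows "almost_increasing_beyond m \<beta>"
proof -
  obtain l c where c: "1 \<le> c" and lc: "\<And>p. m p / c \<le> l p \<and> l p \<le> c * m p"
    and l_mono: "mono (\<lambda>p. (real p + 1) powr (- \<gamma>) * l p)"
    using assms(1) unfolding regular_exponent_def seq_equiv_def by blast
  have "0 \<le> \<gamma>"
    using assms(2) beta_nonneg by simp
  have "m p / real p powr \<gamma> \<le> 2 powr \<gamma> * c\<^sup>2 * (m q / real q powr \<gamma>)" if "1 \<le> p" "p \<le> q" for p q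
  proof -
    have "real p + 1 \<le> 2 * real p"
      using that by simp
    then have "(real p + 1) powr \<gamma> \<le> 2 powr \<gamma> * real p powr \<gamma>"
      using \<open>0 \<le> \<gamma>\<close> powr_mono2[of \<gamma> "real p + 1" "2 * real p"] by (simp add: powr_mult)
    then have "m p / real p powr \<gamma> \<le> 2 powr \<gamma> * (m p / (real p + 1) powr \<gamma>)"
      using that m_pos[of p] by (simp add: field_simps mult_left_mono)
    also have "m p / (real p + 1) powr \<gamma> \<le> c * (l p / (real p + 1) powr \<gamma>)"
      using lc[of p] c by (simp add: field_simps divide_right_mono)
    also have "l p / (real p + 1) powr \<gamma> \<le> l q / (real q + 1) powr \<gamma>"
      using l_mono \<open>p \<le> q\<close> unfolding mono_def by (simp add: powr_minus field_simps)
    also have "l q / (real q + 1) powr \<gamma> \<le> c * (m q / real q powr \<gamma>)"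
    proof -
      have "real q powr \<gamma> \<le> (real q + 1) powr \<gamma>"
        using \<open>0 \<le> \<gamma>\<close> by (intro powr_mono2) auto
      then have "m q / (real q + 1) powr \<gamma> \<le> m q / real q powr \<gamma>"
        using that m_pos[of q] by (intro divide_left_mono) auto
      have "l q / (real q + 1) powr \<gamma> \<le> c * m q / (real q + 1) powr \<gamma>"
        using lc[of q] by (simp add: divide_right_mono)
      also have "\<dots> \<le> c * (m q / real q powr \<gamma>)"
        using mult_left_mono[OF \<open>m q / (real q + 1) powr \<gamma> \<le> m q / real q powr \<gamma>\<close>, of c] c by simp
      finally show ?thesis .
    qed
    finally show ?thesis
      using c by (simp add: power2_eq_square mult_ac mult_left_mono)
  qed
  moreover have "0 < 2 powr \<gamma> * c\<^sup>2"
    using c by simp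
  ultimately show ?thesis
    unfolding almost_increasing_beyond_def almost_increasing_def using assms(2)
    by (intro exI[of _ "\<gamma> - \<beta>"]) auto
qed

lemma almost_increasing_doubling_weight:
  assumes K: "\<And>p q. 1 \<le> p \<Longrightarrow> p \<le> q \<Longrightarrow> m p / real p powr (\<beta> + \<epsilon>) \<le> K * (m q / real q powr (\<beta> + \<epsilon>))"
    and "p \<le> q"
  defines "w \<equiv> \<lambda>p. if p = 0 then 2 powr (- \<beta>) else real p powr (\<beta> + \<epsilon>)"
  shows "m p / w p \<le> 2 powr \<beta> * K * (m q / w q)"
proof (cases "p = 0")
  case True
  have "1 \<le> 2 powr \<beta> * K"
    using almost_increasing_const_ge_1[OF K] beta_nonneg by (simp add: one_le_powr_mult)
  show ?thesis
  proof (cases "q = 0")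
    case True
    then show ?thesis
      using \<open>p = 0\<close> mult_right_mono[OF \<open>1 \<le> 2 powr \<beta> * K\<close>, of "m 0 / w 0"] m_pos[of 0]
      unfolding w_def by simp
  next
    case False
    have "m 0 / w 0 = 2 powr \<beta> * m 0"
      unfolding w_def by (simp add: powr_minus divide_inverse mult.commute)
    also have "\<dots> \<le> 2 powr \<beta> * (m 1 / real 1 powr (\<beta> + \<epsilon>))"
      using m_le[of 0 1] by simp
    also have "\<dots> \<le> 2 powr \<beta> * (K * (m q / real q powr (\<beta> + \<epsilon>)))"
      using K[of 1 q] False by (intro mult_left_mono) auto
    finally show ?thesis
      using True False unfolding w_def by (simp add: mult.assoc)
  qed
next
  case False
  then have "m p / w p \<le> K * (m q / w q)"
    using K[of p q] \<open>p \<le> q\<close> unfolding w_def by simp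
  also have "\<dots> \<le> 2 powr \<beta> * K * (m q / w q)"
    using almost_increasing_const_ge_1[OF K] beta_nonneg m_pos[of q] ge_one_powr_ge_zero[of 2 \<beta>]
    unfolding w_def by (intro mult_right_mono) (auto simp: less_imp_le)
  finally show ?thesis .
qed

lemma doubling_regular_if_almost_increasing_beyond:
  assumes "almost_increasing_beyond m \<beta>"
  shows "doubling_regular m \<beta>"
proof -
  obtain \<epsilon> K where \<epsilon>: "0 < \<epsilon>" and K1: "1 \<le> K"
    and K: "\<And>p q. 1 \<le> p \<Longrightarrow> p \<le> q \<Longrightarrow> m p / real p powr (\<beta> + \<epsilon>) \<le> K * (m q / real q powr (\<beta> + \<epsilon>))"
    using assms by (rule almost_increasing_beyondE) blast
  \<comment> \<open>The value at 0 makes \<open>(p + 1) powr (- \<beta>) * w p\<close> agree at 0 and 1, hence nondecreasing.\<close>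
  define w where "w p = (if p = 0 then 2 powr (- \<beta>) else real p powr (\<beta> + \<epsilon>))" for p
  define S where "S p = Max ((\<lambda>q. m q / w q) ` {..p})" for p
  have w: "0 < w p" for p
    unfolding w_def by simp
  have ai: "m p / w p \<le> 2 powr \<beta> * K * (m q / w q)" if "p \<le> q" for p q
    unfolding w_def using almost_increasing_doubling_weight[OF K that] by simp
  have S_mono: "mono S"
    unfolding S_def using ai by (rule running_max_bounds(3))
  have S_pos: "0 < S p" for p
  proof -
    have "m p / w p \<le> S p"
      unfolding S_def using ai by (rule running_max_bounds(1))
    then show ?thesis
      using divide_pos_pos[OF m_pos w, of p p] by linarith
  qed
  have "1 \<le> 2 powr \<beta> * K"
    using K1 beta_nonneg by (simp add: one_le_powr_mult)
  then have "seq_equiv (\<lambda>p. w p * S p) m"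
    unfolding S_def using m_pos w ai
    by (intro seq_equiv_weighted_running_max[where K = "2 powr \<beta> * K"]) (auto intro: less_imp_le)
  moreover have "mono (\<lambda>p. (real p + 1) powr (- \<beta>) * w p * S p)"
    unfolding w_def using beta_nonneg \<epsilon> S_mono S_pos w
    by (intro mono_mult_nonneg mono_doubling_weight) (auto intro: less_imp_le)
  moreover have "2 powr \<beta> < (INF p\<in>{1..}. w (2 * p) * S (2 * p) / (w p * S p))"
  proof -
    have "2 powr (\<beta> + \<epsilon>) \<le> w (2 * p) * S (2 * p) / (w p * S p)" if "1 \<le> p" for p
    proof -
      have "w (2 * p) = 2 powr (\<beta> + \<epsilon>) * w p"
        unfolding w_def using that by (simp add: powr_mult)
      moreover have "S p \<le> S (2 * p)"
        using S_mono unfolding mono_def by simp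
      ultimately show ?thesis
        using w[of p] S_pos[of p] by (simp add: field_simps mult_left_mono)
    qed
    then have "2 powr (\<beta> + \<epsilon>) \<le> (INF p\<in>{1..}. w (2 * p) * S (2 * p) / (w p * S p))"
      by (intro cINF_greatest) auto
    moreover have "2 powr \<beta> < 2 powr (\<beta> + \<epsilon>)"
      using \<epsilon> by simp
    ultimately show ?thesis
      by linarith
  qed
  ultimately show ?thesis
    unfolding doubling_regular_def by (auto simp: mult.assoc)
qed

lemma uniform_dilation_if_doubling_regular:
  assumes "doubling_regular m \<beta>"
  shows "uniform_dilation m \<beta>"
proof -
  obtain h c where c: "1 \<le> c" and hc: "\<And>p. m p / c \<le> h p \<and> h p \<le> c * m p"
    and doubling: "2 powr \<beta> < (INF p\<in>{1..}. h (2 * p) / h p)"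
    using assms unfolding doubling_regular_def seq_equiv_def by blast
  define a where "a = (INF p\<in>{1..}. h (2 * p) / h p)"
  have h_pos: "0 < h p" for p
  proof -
    have "0 < m p / c"
      using m_pos[of p] c by simp
    with hc[of p] show ?thesis
      by linarith
  qed
  have "0 < a"
    using doubling powr_gt_zero[of 2 \<beta>] unfolding a_def by linarith
  have "a * h p \<le> h (2 * p)" if "1 \<le> p" for p
  proof -
    have "bdd_below ((\<lambda>p. h (2 * p) / h p) ` {1..})"
      using h_pos by (intro bdd_belowI[of _ 0]) (auto intro: less_imp_le)
    then have "a \<le> h (2 * p) / h p"
      unfolding a_def using that by (intro cINF_lower) auto
    then show ?thesis
      using h_pos[of p] by (simp add: field_simps)
  qed
  then have iter: "a ^ j * h p \<le> h (2 ^ j * p)" if "1 \<le> p" for j p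
    using iterated_dilation_bound[of 1 a h 2 p j] that \<open>0 < a\<close> by simp
  show ?thesis
  proof (rule uniform_dilation_if_geometric_growth[of 2 "1 / c\<^sup>2" "a / 2 powr \<beta>" 0])
    show "1 < a / 2 powr \<beta>"
      using doubling unfolding a_def by simp
    fix j p :: nat
    assume "1 \<le> p"
    have "a ^ j * m p \<le> c * (a ^ j * h p)"
      using hc[of p] c \<open>0 < a\<close> by (simp add: field_simps)
    also have "\<dots> \<le> c * h (2 ^ j * p)"
      using iter[OF \<open>1 \<le> p\<close>] c by simp
    also have "\<dots> \<le> c\<^sup>2 * m (2 ^ j * p)"
      using hc[of "2 ^ j * p"] c by (simp add: power2_eq_square mult_left_mono mult.assoc)
    finally show "1 / c\<^sup>2 * (a / 2 powr \<beta>) ^ j * real (2 ^ j) powr \<beta> * m p \<le> m (2 ^ j * p)"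
      using c by (simp add: power_powr power_divide field_simps)
  qed (use c in auto)
qed

lemma beta_index_greater_if_almost_increasing_beyond:
  assumes "almost_increasing_beyond m \<beta>"
  shows "ereal \<beta> < beta_index m"
proof -
  obtain \<epsilon> K where \<epsilon>: "0 < \<epsilon>" and K1: "1 \<le> K"
    and K: "\<And>p q. 1 \<le> p \<Longrightarrow> p \<le> q \<Longrightarrow> m p / real p powr (\<beta> + \<epsilon>) \<le> K * (m q / real q powr (\<beta> + \<epsilon>))"
    using assms by (rule almost_increasing_beyondE) blast
  define \<gamma> where "\<gamma> = \<beta> + \<epsilon>"
  have "0 \<le> \<gamma>"
    unfolding \<gamma>_def using \<epsilon> beta_nonneg by simp
  have "1 / (K * 3 powr \<gamma>) \<le> m (nat \<lfloor>t * x\<rfloor> - 1) / (t powr \<gamma> * m (nat \<lfloor>x\<rfloor> - 1))"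
    if "2 \<le> x" "1 \<le> t" for x t
  proof -
    define p where "p = nat \<lfloor>x\<rfloor> - 1"
    define q where "q = nat \<lfloor>t * x\<rfloor> - 1"
    have "x \<le> t * x"
      using that by simp
    then have p: "1 \<le> p" "p \<le> q" "real p < x" and q: "t * x < real q + 2"
      unfolding p_def q_def using \<open>2 \<le> x\<close> by (linarith, auto intro!: diff_le_mono nat_mono floor_mono, linarith+)
    have "t * real p < 3 * real q"
      using p q \<open>1 \<le> t\<close> mult_strict_left_mono[OF \<open>real p < x\<close>, of t] by linarith
    then have "t powr \<gamma> \<le> (3 * real q / real p) powr \<gamma>"
      using p \<open>1 \<le> t\<close> \<open>0 \<le> \<gamma>\<close> by (intro powr_mono2) (auto simp: field_simps)
    also have "\<dots> = 3 powr \<gamma> * real q powr \<gamma> / real p powr \<gamma>"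
      by (simp add: powr_divide powr_mult)
    finally have "t powr \<gamma> * m p \<le> 3 powr \<gamma> * real q powr \<gamma> / real p powr \<gamma> * m p"
      using m_pos[of p] by (intro mult_right_mono) auto
    also have "\<dots> = 3 powr \<gamma> * (m p / real p powr \<gamma>) * real q powr \<gamma>"
      by simp
    also have "\<dots> \<le> 3 powr \<gamma> * (K * (m q / real q powr \<gamma>)) * real q powr \<gamma>"
      using K[OF p(1,2)] unfolding \<gamma>_def by (intro mult_right_mono mult_left_mono) auto
    also have "\<dots> = K * 3 powr \<gamma> * m q"
      using p by simp
    finally show ?thesis
      using \<open>1 \<le> t\<close> K1 m_pos[of p] unfolding p_def q_def by (simp add: field_simps)
  qed
  then have "ereal \<gamma> \<le> beta_index m"
    unfolding beta_index_def using K1 by (intro lower_matuszewska_ge[where X = 2]) auto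
  moreover have "ereal \<beta> < ereal \<gamma>"
    unfolding \<gamma>_def using \<epsilon> by simp
  ultimately show ?thesis
    by (rule order_less_le_trans[rotated])
qed

lemma dilation_ratio_exceeds_if_beta_index_greater:
  assumes "ereal \<beta> < beta_index m"
  shows "dilation_ratio_exceeds m \<beta>"
proof -
  define f where "f x = m (nat \<lfloor>x\<rfloor> - 1)" for x :: real
  obtain b c where "\<beta> < b" "0 < c"
    and growth: "\<And>t. 1 \<le> t \<Longrightarrow> eventually (\<lambda>x. c * t powr b * f x \<le> f (t * x)) at_top"
    using lower_matuszewska_greaterE[of \<beta> f] assms m_pos unfolding beta_index_def f_def by blast
  obtain k :: nat where k: "2 \<le> k" and large: "2 powr \<beta> / c < real k powr (b - \<beta>)"
    using eventually_conj[OF eventually_less_powr[of "b - \<beta>" "2 powr \<beta> / c"] eventually_ge_at_top[of 2]]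
      eventually_happens'[OF sequentially_bot] \<open>\<beta> < b\<close> by auto
  have "real (2 * k) powr \<beta> = 2 powr \<beta> * real k powr \<beta>"
    by (simp add: powr_mult)
  also have "\<dots> < c * real k powr (b - \<beta>) * real k powr \<beta>"
    using large \<open>0 < c\<close> k by (simp add: field_simps)
  also have "\<dots> = c * real k powr b"
    using k by (simp add: powr_diff)
  finally have exceeds: "real (2 * k) powr \<beta> < c * real k powr b" .
  obtain X :: real where X: "\<And>x. X \<le> x \<Longrightarrow> c * real k powr b * f x \<le> f (real k * x)"
    using growth[of k] k unfolding eventually_at_top_linorder by auto
  have "c * real k powr b * m p \<le> m (2 * k * p)" if "max 1 (nat \<lceil>X\<rceil>) \<le> p" for p
  proof -
    have "X \<le> real (p + 1)"
      using that by linarith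
    moreover have "f (real (p + 1)) = m p"
      unfolding f_def by (simp only: floor_of_nat nat_int) simp
    moreover have "f (real k * real (p + 1)) = m (k * p + k - 1)"
      unfolding f_def of_nat_mult[symmetric] by (simp only: floor_of_nat nat_int) (simp add: algebra_simps)
    ultimately have "c * real k powr b * m p \<le> m (k * p + k - 1)"
      using X[of "real (p + 1)"] by simp
    also have "m (k * p + k - 1) \<le> m (2 * k * p)"
    proof (rule m_le)
      have "k \<le> k * p" "2 * k * p = k * p + k * p"
        using that by simp_all
      then show "k * p + k - 1 \<le> 2 * k * p"
        by linarith
    qed
    finally show ?thesis .
  qed
  then have "eventually (\<lambda>p. c * real k powr b * m p \<le> m (2 * k * p)) sequentially"
    unfolding eventually_sequentially by blast
  with exceeds k show ?thesis
    unfolding dilation_ratio_exceeds_iff by (intro exI[of _ "2 * k"]) auto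
qed

lemma head_sum_block:
  assumes "1 \<le> p"
  shows "m p / (real p + 1) powr \<beta> / 2 powr (2 + \<beta>)
    \<le> (\<Sum>k\<in>{p<..2 * p}. m k / (real k + 1) powr (1 + \<beta>))"
proof -
  define Y where "Y = 2 powr \<beta> * (real p + 1) powr \<beta>"
  have "0 < Y"
    unfolding Y_def by simp
  have "m p / (2 * (real p + 1)) powr (1 + \<beta>) \<le> m k / (real k + 1) powr (1 + \<beta>)" if "k \<in> {p<..2 * p}" for k
    using that beta_nonneg m_le[of p k] m_pos[of p]
    by (intro frac_le powr_mono2) auto
  then have "real (card {p<..2 * p}) * (m p / (2 * (real p + 1)) powr (1 + \<beta>))
      \<le> (\<Sum>k\<in>{p<..2 * p}. m k / (real k + 1) powr (1 + \<beta>))"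
    by (rule sum_bounded_below)
  moreover have "(2 * (real p + 1)) powr (1 + \<beta>) = 2 * (real p + 1) * Y"
    unfolding Y_def by (simp only: powr_mult powr_add) simp
  ultimately have "m p / Y * (real p / (2 * (real p + 1)))
      \<le> (\<Sum>k\<in>{p<..2 * p}. m k / (real k + 1) powr (1 + \<beta>))"
    by (simp add: mult_ac)
  moreover have "1 / 4 \<le> real p / (2 * (real p + 1))"
    using assms by (simp add: field_simps)
  then have "m p / Y * (1 / 4) \<le> m p / Y * (real p / (2 * (real p + 1)))"
    using m_pos[of p] \<open>0 < Y\<close> by (intro mult_left_mono) auto
  moreover have "m p / (real p + 1) powr \<beta> / 2 powr (2 + \<beta>) = m p / Y * (1 / 4)"
    unfolding Y_def by (simp add: powr_add)
  ultimately show ?thesis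
    by linarith
qed

lemma uniform_dilation_if_head_sum_bounded:
  assumes "head_sum_bounded m \<beta>"
  shows "uniform_dilation m \<beta>"
proof -
  define B where "B p = m p / (real p + 1) powr \<beta>" for p
  define s where "s p = (\<Sum>k\<le>p. m k / (real k + 1) powr (1 + \<beta>))" for p
  obtain C where "0 < C" and s_le: "\<And>p. s p \<le> C * B p"
    using assms unfolding head_sum_bounded_def s_def B_def by (auto simp: mult.assoc)
  have s_nonneg: "0 \<le> s p" for p
    unfolding s_def using m_pos by (intro sum_nonneg) (auto intro: less_imp_le)
  have increment: "s p + B p / 2 powr (2 + \<beta>) \<le> s (2 * p)" if "1 \<le> p" for p
  proof -
    have split: "{..2 * p} = {..p} \<union> {p<..2 * p}"
      by auto
    have "s (2 * p) = s p + (\<Sum>k\<in>{p<..2 * p}. m k / (real k + 1) powr (1 + \<beta>))"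
      unfolding s_def split by (subst sum.union_disjoint) auto
    with head_sum_block[OF that] show ?thesis
      unfolding B_def by simp
  qed
  obtain A \<rho> where "0 < A" "1 < \<rho>" and growth: "\<And>j p. 1 \<le> j \<Longrightarrow> 1 \<le> p \<Longrightarrow> A * \<rho> ^ j * B p \<le> B (2 ^ j * p)"
    by (rule doubling_growth_from_increments[where s = s and B = B, OF \<open>0 < C\<close> _ s_nonneg s_le increment]) auto
  show ?thesis
    by (rule uniform_dilation_if_dyadic_growth[OF \<open>0 < A\<close> \<open>1 < \<rho>\<close>]) (use growth in \<open>simp add: B_def\<close>)
qed

lemma head_sum_bounded_if_almost_increasing_beyond:
  assumes "almost_increasing_beyond m \<beta>"
  shows "head_sum_bounded m \<beta>"
proof -
  obtain \<epsilon> K where \<epsilon>: "0 < \<epsilon>" "\<epsilon> \<le> 1" and K1: "1 \<le> K"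
    and K: "\<And>p q. 1 \<le> p \<Longrightarrow> p \<le> q \<Longrightarrow> m p / real p powr (\<beta> + \<epsilon>) \<le> K * (m q / real q powr (\<beta> + \<epsilon>))"
    using assms by (rule almost_increasing_beyondE) blast
  define a where "a k = m k / (real k + 1) powr (\<beta> + \<epsilon>)" for k
  define K' where "K' = 2 powr (\<beta> + \<epsilon>) * K"
  have "1 \<le> K'"
    unfolding K'_def using K1 beta_nonneg \<epsilon> by (simp add: one_le_powr_mult)
  have split: "(real k + 1) powr (\<beta> + \<epsilon>) = (real k + 1) powr \<beta> * (real k + 1) powr \<epsilon>"
    "(real k + 1) powr (1 + \<beta>) = (real k + 1) powr \<beta> * (real k + 1) powr 1" for k
    by (simp_all add: powr_add)
  show ?thesis
    unfolding head_sum_bounded_def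
  proof (intro exI[of _ "K' / \<epsilon>"] conjI allI)
    fix p
    have "(\<Sum>k\<le>p. m k / (real k + 1) powr (1 + \<beta>)) = (\<Sum>k\<le>p. a k * (real k + 1) powr (\<epsilon> - 1))"
      unfolding a_def split by (intro sum.cong) (simp_all add: powr_diff)
    also have "\<dots> \<le> (\<Sum>k\<le>p. K' * a p * (real k + 1) powr (\<epsilon> - 1))"
      unfolding a_def K'_def using beta_nonneg \<epsilon>
      by (intro sum_mono mult_right_mono almost_increasing_shift[OF K]) auto
    also have "\<dots> = K' * a p * (\<Sum>k\<le>p. (real k + 1) powr (\<epsilon> - 1))"
      by (simp add: sum_distrib_left)
    also have "\<dots> \<le> K' * a p * ((real p + 1) powr \<epsilon> / \<epsilon>)"
      using sum_powr_le[OF \<epsilon>] \<open>1 \<le> K'\<close> m_pos[of p] unfolding a_def by (intro mult_left_mono) auto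
    also have "\<dots> = K' / \<epsilon> * m p / (real p + 1) powr \<beta>"
      unfolding a_def split by simp
    finally show "(\<Sum>k\<le>p. m k / (real k + 1) powr (1 + \<beta>)) \<le> K' / \<epsilon> * m p / (real p + 1) powr \<beta>" .
  qed (use \<open>1 \<le> K'\<close> \<epsilon> in auto)
qed

lemma tail_sum_block:
  assumes "1 \<le> p"
  shows "(real (2 * p) + 1) powr \<beta> / m (2 * p) / 2 powr (1 + \<beta>)
    \<le> (\<Sum>n<p. (real (n + p) + 1) powr (\<beta> - 1) / m (n + p))"
proof -
  have "(real p + 1) powr \<beta> / (2 * real p * m (2 * p)) \<le> (real (n + p) + 1) powr \<beta> / ((real (n + p) + 1) * m (n + p))"
    if "n < p" for n
    using that beta_nonneg m_le[of "n + p" "2 * p"] m_pos[of "n + p"]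
    by (intro frac_le powr_mono2 mult_mono) auto
  also have "(real (n + p) + 1) powr \<beta> / ((real (n + p) + 1) * m (n + p)) = (real (n + p) + 1) powr (\<beta> - 1) / m (n + p)" for n
    by (simp add: powr_diff)
  finally have "real (card {..<p}) * ((real p + 1) powr \<beta> / (2 * real p * m (2 * p)))
      \<le> (\<Sum>n<p. (real (n + p) + 1) powr (\<beta> - 1) / m (n + p))"
    by (intro sum_bounded_below) auto
  then have "(real p + 1) powr \<beta> / (2 * m (2 * p)) \<le> (\<Sum>n<p. (real (n + p) + 1) powr (\<beta> - 1) / m (n + p))"
    using assms by simp
  moreover have "(real (2 * p) + 1) powr \<beta> \<le> (2 * (real p + 1)) powr \<beta>"
    using beta_nonneg by (intro powr_mono2) auto
  then have "(real (2 * p) + 1) powr \<beta> / m (2 * p) / 2 powr (1 + \<beta>) \<le> (real p + 1) powr \<beta> / (2 * m (2 * p))"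
    using m_pos[of "2 * p"] unfolding powr_mult by (simp add: powr_add field_simps)
  ultimately show ?thesis
    by linarith
qed

lemma uniform_dilation_if_tail_sum_bounded:
  assumes "tail_sum_bounded m \<beta>"
  shows "uniform_dilation m \<beta>"
proof -
  define F where "F n = (real n + 1) powr (\<beta> - 1) / m n" for n
  define T where "T p = (real p + 1) powr \<beta> / m p" for p
  define t where "t p = (\<Sum>k. F (k + p))" for p
  obtain C where "0 < C" and summable: "\<And>p. summable (\<lambda>k. F (k + p))" and t_le: "\<And>p. t p \<le> C * T p"
    using assms unfolding tail_sum_bounded_def F_def T_def t_def by (auto simp: mult.assoc)
  have t_nonneg: "0 \<le> t p" for p
    unfolding t_def using summable m_pos by (intro suminf_nonneg) (auto simp: F_def intro: less_imp_le)
  have increment: "t (2 * p) + T (2 * p) / 2 powr (1 + \<beta>) \<le> t p" if "1 \<le> p" for p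
  proof -
    have "(\<lambda>n. F (n + p + p)) = (\<lambda>n. F (n + 2 * p))"
      by (simp add: mult_2 add.assoc)
    then have "t p = t (2 * p) + (\<Sum>n<p. F (n + p))"
      using suminf_split_initial_segment[OF summable[of p], of p] unfolding t_def by simp
    with tail_sum_block[OF that] show ?thesis
      unfolding T_def F_def by simp
  qed
  obtain A \<rho> where "0 < A" "1 < \<rho>" and decay: "\<And>j p. 1 \<le> j \<Longrightarrow> 1 \<le> p \<Longrightarrow> A * \<rho> ^ j * T (2 ^ j * p) \<le> T p"
    by (rule doubling_decay_from_increments[where t = t and T = T, OF \<open>0 < C\<close> _ t_nonneg t_le increment]) auto
  show ?thesis
  proof (rule uniform_dilation_if_dyadic_growth[OF \<open>0 < A\<close> \<open>1 < \<rho>\<close>])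
    fix j p :: nat
    assume "1 \<le> j" "1 \<le> p"
    have "0 < (real (2 ^ j * p) + 1) powr \<beta>"
      unfolding powr_gt_zero by linarith
    from mult_frac_le_swap[OF decay[OF \<open>1 \<le> j\<close> \<open>1 \<le> p\<close>, unfolded T_def] m_pos m_pos _ this]
    show "A * \<rho> ^ j * (m p / (real p + 1) powr \<beta>) \<le> m (2 ^ j * p) / (real (2 ^ j * p) + 1) powr \<beta>"
      by simp
  qed
qed

lemma tail_sum_bounded_if_almost_increasing_beyond:
  assumes "almost_increasing_beyond m \<beta>"
  shows "tail_sum_bounded m \<beta>"
proof -
  obtain \<epsilon> K where \<epsilon>: "0 < \<epsilon>" and K1: "1 \<le> K"
    and K: "\<And>p q. 1 \<le> p \<Longrightarrow> p \<le> q \<Longrightarrow> m p / real p powr (\<beta> + \<epsilon>) \<le> K * (m q / real q powr (\<beta> + \<epsilon>))"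
    using assms by (rule almost_increasing_beyondE) blast
  define F where "F n = (real n + 1) powr (\<beta> - 1) / m n" for n
  define g where "g n = (real n + 1) powr (- \<epsilon>)" for n
  define K' where "K' = 2 powr (\<beta> + \<epsilon>) * K * (2 powr (1 + \<epsilon>) / \<epsilon>)"
  have "0 < K'"
    unfolding K'_def using K1 \<epsilon> by simp
  show ?thesis
    unfolding tail_sum_bounded_def
  proof (intro exI[of _ K'] conjI allI)
    fix p
    define Z where "Z = K' * (real p + 1) powr (\<beta> + \<epsilon>) / m p"
    have F_le: "F n \<le> Z * (g n - g (Suc n))" if "p \<le> n" for n
    proof -
      have "m p / (real p + 1) powr (\<beta> + \<epsilon>) \<le> 2 powr (\<beta> + \<epsilon>) * K * (m n / (real n + 1) powr (\<beta> + \<epsilon>))"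
        using beta_nonneg \<epsilon> that by (intro almost_increasing_shift[OF K]) auto
      then have "(real n + 1) powr (\<beta> + \<epsilon>) / m n \<le> 2 powr (\<beta> + \<epsilon>) * K * (real p + 1) powr (\<beta> + \<epsilon>) / m p"
        using m_pos[of p] m_pos[of n] by (simp add: field_simps)
      moreover have "(real n + 1) powr (-1 - \<epsilon>) \<le> 2 powr (1 + \<epsilon>) / \<epsilon> * (g n - g (Suc n))"
        unfolding g_def using powr_le_telescoping[OF \<epsilon>, of "real n"] by (simp add: add.commute add.left_commute)
      ultimately have "(real n + 1) powr (\<beta> + \<epsilon>) / m n * (real n + 1) powr (-1 - \<epsilon>)
          \<le> 2 powr (\<beta> + \<epsilon>) * K * (real p + 1) powr (\<beta> + \<epsilon>) / m p * (2 powr (1 + \<epsilon>) / \<epsilon> * (g n - g (Suc n)))"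
        using m_pos[of p] K1 by (intro mult_mono) auto
      also have "\<dots> = Z * (g n - g (Suc n))"
        unfolding Z_def K'_def by (simp add: field_simps)
      also have "(real n + 1) powr (\<beta> + \<epsilon>) / m n * (real n + 1) powr (-1 - \<epsilon>) = F n"
        unfolding F_def by (simp add: powr_add[symmetric])
      finally show ?thesis .
    qed
    have F_nonneg: "0 \<le> F n" if "p \<le> n" for n
      unfolding F_def using m_pos[of n] by simp
    have "filterlim (\<lambda>k. (real p + 1) + real k) at_top sequentially"
      by (rule filterlim_tendsto_add_at_top[OF tendsto_const filterlim_real_sequentially])
    then have "(\<lambda>k. g (k + p)) \<longlonglongrightarrow> 0"
      unfolding g_def using \<epsilon> by (intro tendsto_neg_powr) (simp_all add: algebra_simps)
    note summable_le_telescoping[OF F_nonneg F_le this]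
    moreover have "Z * g p = K' * (real p + 1) powr \<beta> / m p"
      unfolding Z_def g_def by (simp add: powr_add powr_minus field_simps)
    ultimately show "summable (\<lambda>k. (real (k + p) + 1) powr (\<beta> - 1) / m (k + p))"
      "(\<Sum>k. (real (k + p) + 1) powr (\<beta> - 1) / m (k + p)) \<le> K' * (real p + 1) powr \<beta> / m p"
      unfolding F_def by auto
  qed (fact \<open>0 < K'\<close>)
qed

end

lemma quotients_pos: "weight_sequence M \<Longrightarrow> 0 < quotients M p"
  unfolding weight_sequence_def quotients_def by simp

lemma mono_quotients:
  assumes "weight_sequence M"
  shows "mono (quotients M)"
proof (rule incseq_SucI)
  fix p
  have pos: "\<And>p. 0 < M p" and "(M (Suc p))\<^sup>2 \<le> M p * M (Suc (Suc p))"
    using assms unfolding weight_sequence_def by (auto dest: spec[of _ "Suc p"])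
  then show "quotients M p \<le> quotients M (Suc p)"
    unfolding quotients_def using pos[of p] pos[of "Suc p"]
    by (simp add: field_simps power2_eq_square)
qed

theorem theorem3p11:
  fixes M :: "nat \<Rightarrow> real" and \<beta> :: real
  assumes "weight_sequence M" and "\<beta> \<ge> 0"
  defines "m \<equiv> quotients M"
  defines "c1 \<equiv> (\<exists>C>0. \<forall>p. summable (\<lambda>k. (real (k + p) + 1) powr (\<beta> - 1) / m (k + p)) \<and>
                 (\<Sum>k. (real (k + p) + 1) powr (\<beta> - 1) / m (k + p))
                    \<le> C * (real p + 1) powr \<beta> / m p)"
  defines "c2 \<equiv> (\<exists>\<epsilon>>0. almost_increasing (\<lambda>p. m p / real p powr (\<beta> + \<epsilon>)))"
  defines "c3 \<equiv> (\<exists>h. seq_equiv h m \<and> mono (\<lambda>p. (real p + 1) powr (- \<beta>) * h p) \<and>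
                 (INF p\<in>{1..}. h (2 * p) / h p) > 2 powr \<beta>)"
  defines "c4 \<equiv> ((\<lambda>k. Liminf sequentially (\<lambda>p. ereal (m (k * p) / (real k powr \<beta> * m p))))
                 \<longlonglongrightarrow> PInfty)"
  defines "c5 \<equiv> (\<exists>k::nat. k \<ge> 2 \<and>
                 Liminf sequentially (\<lambda>p. ereal (m (k * p) / m p)) > ereal (real k powr \<beta>))"
  defines "c6 \<equiv> (\<forall>\<theta>::real. 0 < \<theta> \<and> \<theta> < 1 \<longrightarrow> (\<exists>k::nat. k \<ge> 2 \<and>
                 (\<forall>p\<ge>1. m p \<le> \<theta> * real k powr (- \<beta>) * m (k * p))))"
  defines "c7 \<equiv> (beta_index m > ereal \<beta>)"
  defines "c8 \<equiv> (gamma_index M > ereal \<beta>)"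
  defines "c9 \<equiv> (\<exists>C>0. \<forall>p. (\<Sum>k\<le>p. m k / (real k + 1) powr (1 + \<beta>))
                 \<le> C * m p / (real p + 1) powr \<beta>)"
  shows "(c1 \<longleftrightarrow> c2) \<and> (c1 \<longleftrightarrow> c3) \<and> (c1 \<longleftrightarrow> c4) \<and> (c1 \<longleftrightarrow> c5) \<and> (c1 \<longleftrightarrow> c6) \<and>
         (c1 \<longleftrightarrow> c7) \<and> (c1 \<longleftrightarrow> c8) \<and> (c1 \<longleftrightarrow> c9)"
proof -
  interpret nondecreasing_quotients m \<beta>
    unfolding m_def using assms(1,2) by unfold_locales (auto intro: quotients_pos mono_quotients)
  have conditions: "c1 = tail_sum_bounded m \<beta>" "c2 = almost_increasing_beyond m \<beta>"
    "c3 = doubling_regular m \<beta>" "c4 = dilation_ratio_unbounded m \<beta>" "c5 = dilation_ratio_exceeds m \<beta>"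
    "c6 = uniform_dilation m \<beta>" "c7 = (ereal \<beta> < beta_index m)" "c9 = head_sum_bounded m \<beta>"
    unfolding c1_def c2_def c3_def c4_def c5_def c6_def c7_def c9_def tail_sum_bounded_def
      almost_increasing_beyond_def doubling_regular_def dilation_ratio_unbounded_def
      dilation_ratio_exceeds_def uniform_dilation_def head_sum_bounded_def
    by (rule refl)+
  have "c8 \<longleftrightarrow> (\<exists>\<gamma>>\<beta>. regular_exponent m \<gamma>)"
    unfolding c8_def gamma_index_def P_cond_def regular_exponent_def m_def less_Sup_iff by fastforce
  then show ?thesis
    unfolding conditions
    using almost_increasing_beyond_if_uniform_dilation dilation_ratio_unbounded_if_almost_increasing_beyond
      dilation_ratio_exceeds_if_unbounded uniform_dilation_if_dilation_ratio_exceeds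
      tail_sum_bounded_if_almost_increasing_beyond uniform_dilation_if_tail_sum_bounded
      doubling_regular_if_almost_increasing_beyond uniform_dilation_if_doubling_regular
      beta_index_greater_if_almost_increasing_beyond dilation_ratio_exceeds_if_beta_index_greater
      regular_exponent_if_almost_increasing_beyond almost_increasing_beyond_if_regular_exponent
      head_sum_bounded_if_almost_increasing_beyond uniform_dilation_if_head_sum_bounded
    by blast
qed
end
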